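(* Let $X$ be a topological space and let $\kappa,\mu\in\mathrm{MG}(X)$ be cardinals with $\kappa<\mu$. Assume that either (1) $\kappa=1$ and $\omega_0<\mu$, or (2) $\omega_0\le\kappa$. Then $X$ is discrete.
   Context: A linearly ordered Abelian group is an Abelian group with a linear order compatible with addition. For $x,y\in G_{>0}$, $x\asymp y$ iff $y\le nx$ and $x\le my$ for some $n,m\in\mathbb{Z}_{\ge1}$; $\mathrm{Arc}(G)=G_{>0}/\asymp$, ordered by $[x]\preceq[y]$ iff ($nx<y$ for all $n$) or $x\asymp y$; $\mathrm{Arc}(G)^\perp$ is $\mathrm{Arc}(G)$ with a new least element adjoined. For a bottomed linearly ordered set $S$ (least element $\perp_S$, $S^*=S\setminus\{\perp_S\}$), $\chi(S)$ is the least cardinal $\kappa>0$ such that some strictly decreasing family $(s_\alpha)_{\alpha<\kappa}$ in $S^*$ has every $t\in S^*$ bounded below by some $s_\alpha$. A $G$-metric on $X$: $d\colon X^2\to G$ with $d(x,y)=0\iff x=y$, $d\ge0$, symmetric, triangle inequality; $\mathrm{Met}(X;G)$ is the set of $G$-metrics generating the topology of $X$ via open balls of radii in $G_{>0}$. $\kappa\in\mathrm{MG}(X)$ iff some linearly ordered Abelian group $G$ with $\chi(\mathrm{Arc}(G)^\perp)=\kappa$ has $\mathrm{Met}(X;G)\ne\emptyset$. *)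

theory Defs
  imports "HOL-Analysis.Analysis"
begin

primrec nsmul :: "nat \<Rightarrow> 'g::linordered_ab_group_add \<Rightarrow> 'g" where
  "nsmul 0 x = 0"
| "nsmul (Suc n) x = x + nsmul n x"

definition arc_equiv :: "'g::linordered_ab_group_add \<Rightarrow> 'g \<Rightarrow> bool" where
  "arc_equiv x y \<longleftrightarrow> 0 < x \<and> 0 < y \<and>
     (\<exists>n::nat. n \<ge> 1 \<and> y \<le> nsmul n x) \<and> (\<exists>m::nat. m \<ge> 1 \<and> x \<le> nsmul m y)"

definition Arc :: "'g::linordered_ab_group_add set set" where
  "Arc = {{y. arc_equiv x y} | x. 0 < x}"

definition arc_le :: "'g::linordered_ab_group_add set \<Rightarrow> 'g set \<Rightarrow> bool" where
  "arc_le A B \<longleftrightarrow> (\<exists>x\<in>A. \<exists>y\<in>B. (\<forall>n::nat. n \<ge> 1 \<longrightarrow> nsmul n x < y) \<or> arc_equiv x y)"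

text \<open>Arc(G)^perp: Arc(G) with a new least element adjoined (None).\<close>
definition Arc_bot :: "'g::linordered_ab_group_add set option set" where
  "Arc_bot = insert None (Some ` Arc)"

fun arc_bot_le :: "'g::linordered_ab_group_add set option \<Rightarrow> 'g set option \<Rightarrow> bool" where
  "arc_bot_le None _ = True"
| "arc_bot_le (Some A) None = False"
| "arc_bot_le (Some A) (Some B) = arc_le A B"

text \<open>For a bottomed linearly ordered set (S, le) with least element bot, and a cardinal
  kappa (an initial-ordinal well-order, i.e. Card_order), there is a strictly decreasing
  family indexed by kappa in S* which is coinitial (every t in S* is bounded below by some member).\<close>
definition chi_family :: "'s set \<Rightarrow> ('s \<Rightarrow> 's \<Rightarrow> bool) \<Rightarrow> 's \<Rightarrow> 'k rel \<Rightarrow> bool" where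
  "chi_family S le b \<kappa> \<longleftrightarrow> (\<exists>s. (\<forall>i\<in>Field \<kappa>. s i \<in> S - {b})
      \<and> (\<forall>i j. (i, j) \<in> \<kappa> \<and> i \<noteq> j \<longrightarrow> le (s j) (s i) \<and> s j \<noteq> s i)
      \<and> (\<forall>t\<in>S - {b}. \<exists>i\<in>Field \<kappa>. le (s i) t))"

definition chi_is :: "'s set \<Rightarrow> ('s \<Rightarrow> 's \<Rightarrow> bool) \<Rightarrow> 's \<Rightarrow> 'k rel \<Rightarrow> bool" where
  "chi_is S le b \<kappa> \<longleftrightarrow> Card_order \<kappa> \<and> Field \<kappa> \<noteq> {} \<and> chi_family S le b \<kappa>
      \<and> (\<forall>\<nu>::'k rel. Card_order \<nu> \<and> Field \<nu> \<noteq> {} \<and> chi_family S le b \<nu> \<longrightarrow> (\<kappa>, \<nu>) \<in> ordLeq)"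

definition is_Gmetric :: "'a set \<Rightarrow> ('a \<Rightarrow> 'a \<Rightarrow> 'g::linordered_ab_group_add) \<Rightarrow> bool" where
  "is_Gmetric A d \<longleftrightarrow>
     (\<forall>x\<in>A. \<forall>y\<in>A. (d x y = 0 \<longleftrightarrow> x = y) \<and> 0 \<le> d x y \<and> d x y = d y x)
   \<and> (\<forall>x\<in>A. \<forall>y\<in>A. \<forall>z\<in>A. d x z \<le> d x y + d y z)"

definition gball :: "'a set \<Rightarrow> ('a \<Rightarrow> 'a \<Rightarrow> 'g::linordered_ab_group_add) \<Rightarrow> 'a \<Rightarrow> 'g \<Rightarrow> 'a set" where
  "gball A d x r = {y\<in>A. d x y < r}"

definition Met :: "'a topology \<Rightarrow> ('a \<Rightarrow> 'a \<Rightarrow> 'g::linordered_ab_group_add) set" where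
  "Met X = {d. is_Gmetric (topspace X) d \<and>
      X = topology_generated_by {gball (topspace X) d x r | x r. x \<in> topspace X \<and> 0 < r}}"

text \<open>Cardinals kappa witnessed for MG(X) by some linearly ordered Abelian group on the type 'g.
  MG(X) is the union of these over all types 'g.\<close>
definition MG :: "'a topology \<Rightarrow> 'g::linordered_ab_group_add itself \<Rightarrow> 'k rel set" where
  "MG X T = {\<kappa>. \<exists>d::'a \<Rightarrow> 'a \<Rightarrow> 'g. d \<in> Met X \<and> chi_is (Arc_bot::'g set option set) arc_bot_le None \<kappa>}"

end

theory Submission
  imports Defs "HOL-Library.Countable_Set_Type"
begin

text \<open>Let \<open>d\<close> be a \<open>G\<close>-metric and \<open>e\<close> an \<open>H\<close>-metric for \<open>X\<close>, where
  \<open>\<chi>(Arc(G)\<^sup>\<bottom>) = \<kappa> < \<mu> = \<chi>(Arc(H)\<^sup>\<bottom>)\<close>. Under either hypothesis the positive cone of \<open>G\<close>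
  has a coinitial subset \<open>R\<close> of cardinality \<open>< \<mu>\<close>: for infinite \<open>\<kappa>\<close>, representatives of a
  strictly decreasing coinitial \<open>\<kappa>\<close>-family of Archimedean classes will do, because an infinite
  cardinal has no last element; for \<open>\<kappa> = 1\<close> there is a least Archimedean class, and repeated
  halving inside it gives a countable coinitial set.

  If a point \<open>x\<close> were not isolated, pick \<open>y\<^sub>r \<noteq> x\<close> with \<open>d(x, y\<^sub>r) < r\<close> for \<open>r \<in> R\<close>.
  As \<open>d\<close> and \<open>e\<close> induce the same topology, the Archimedean classes of the \<open>e(x, y\<^sub>r)\<close>
  are coinitial in \<open>Arc(H)\<close>. But in a linear order no coinitial subset is smaller than \<open>\<chi>\<close>:
  a coinitial subset of least cardinality can be well-ordered into a strictly decreasing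
  coinitial family by transfinite recursion.\<close>

unbundle cardinal_syntax

section \<open>Multiples and Archimedean classes\<close>

lemma nsmul_add: "nsmul (m + n) x = nsmul m x + nsmul n x"
  by (induction m) (simp_all add: add.assoc)

lemma nsmul_mult: "nsmul (m * n) x = nsmul m (nsmul n x)"
  by (induction m) (simp_all add: nsmul_add)

lemma nsmul_2: "nsmul 2 x = x + x"
  by (simp add: numeral_2_eq_2)

lemma nsmul_mono: "x \<le> y \<Longrightarrow> nsmul n x \<le> nsmul n y"
  by (induction n) (simp_all add: add_mono)

lemma nsmul_strict_mono:
  assumes "x < y" "n \<ge> 1"
  shows "nsmul n x < nsmul n y"
  using assms
proof (induction n)
  case (Suc n)
  then show ?case using nsmul_mono[of x y n] by (simp add: add_less_le_mono)
qed simp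

lemma nsmul_le_cancel: "n \<ge> 1 \<Longrightarrow> nsmul n x \<le> nsmul n y \<Longrightarrow> x \<le> y"
  using nsmul_strict_mono[of y x n] by (meson not_le)

lemma nsmul_nonneg: "0 \<le> x \<Longrightarrow> 0 \<le> nsmul n x"
  by (induction n) simp_all

lemma nsmul_mono_left:
  assumes "0 \<le> x" "m \<le> n"
  shows "nsmul m x \<le> nsmul n x"
proof -
  obtain k where "n = k + m" using assms(2) by (metis add.commute le_add_diff_inverse)
  then show ?thesis using nsmul_nonneg[OF assms(1), of k] by (simp add: nsmul_add)
qed

definition bounded_by_multiple :: "'g::linordered_ab_group_add \<Rightarrow> 'g \<Rightarrow> bool" where
  "bounded_by_multiple x y \<longleftrightarrow> (\<exists>m::nat. m \<ge> 1 \<and> x \<le> nsmul m y)"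

lemma bounded_by_multiple_if_le: "x \<le> y \<Longrightarrow> bounded_by_multiple x y"
  unfolding bounded_by_multiple_def by (rule exI[of _ 1]) simp

lemma bounded_by_multiple_trans:
  assumes "bounded_by_multiple x y" "bounded_by_multiple y z"
  shows "bounded_by_multiple x z"
proof -
  obtain m where m: "m \<ge> 1" "x \<le> nsmul m y" using assms(1) bounded_by_multiple_def by blast
  obtain n where n: "n \<ge> 1" "y \<le> nsmul n z" using assms(2) bounded_by_multiple_def by blast
  have "x \<le> nsmul (m * n) z"
    using m(2) nsmul_mono[OF n(2), of m] by (simp add: nsmul_mult)
  moreover have "m * n \<ge> 1" using m n by simp
  ultimately show ?thesis unfolding bounded_by_multiple_def by blast
qed

lemma less_if_not_bounded_by_multiple:
  assumes "bounded_by_multiple a g" "\<not> bounded_by_multiple a b"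
  shows "b < g"
proof -
  obtain m where m: "m \<ge> 1" "a \<le> nsmul m g" using assms(1) bounded_by_multiple_def by blast
  then have "nsmul m b < nsmul m g" using assms(2) unfolding bounded_by_multiple_def by force
  then show ?thesis using nsmul_mono[of g b m] by (meson not_le)
qed

lemma arc_equiv_iff:
  "arc_equiv x y \<longleftrightarrow> 0 < x \<and> 0 < y \<and> bounded_by_multiple x y \<and> bounded_by_multiple y x"
  unfolding arc_equiv_def bounded_by_multiple_def by blast

definition arc_class :: "'g::linordered_ab_group_add \<Rightarrow> 'g set" where
  "arc_class x = {y. arc_equiv x y}"

lemma arc_class_self: "0 < x \<Longrightarrow> x \<in> arc_class x"
  unfolding arc_class_def arc_equiv_iff using bounded_by_multiple_if_le by blast

lemma arc_class_eq_iff: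
  assumes "0 < x" "0 < y"
  shows "arc_class x = arc_class y \<longleftrightarrow> arc_equiv x y"
proof
  assume "arc_equiv x y"
  then have "arc_equiv x z \<longleftrightarrow> arc_equiv y z" for z
    using bounded_by_multiple_trans unfolding arc_equiv_iff by blast
  then show "arc_class x = arc_class y" unfolding arc_class_def by blast
qed (use arc_class_self[OF assms(2)] in \<open>auto simp: arc_class_def\<close>)

lemma arc_le_arc_class_iff:
  assumes "0 < x" "0 < y"
  shows "arc_le (arc_class x) (arc_class y) \<longleftrightarrow> bounded_by_multiple x y"
proof
  assume "arc_le (arc_class x) (arc_class y)"
  then obtain x' y' where "arc_equiv x x'" "arc_equiv y y'"
    and "(\<forall>n::nat. n \<ge> 1 \<longrightarrow> nsmul n x' < y') \<or> arc_equiv x' y'"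
    unfolding arc_le_def arc_class_def by blast
  then have "bounded_by_multiple x x'" "bounded_by_multiple x' y'" "bounded_by_multiple y' y"
    using bounded_by_multiple_if_le[of x' y'] unfolding arc_equiv_iff by force+
  then show "bounded_by_multiple x y" using bounded_by_multiple_trans by blast
next
  assume bounded: "bounded_by_multiple x y"
  have "(\<forall>n::nat. n \<ge> 1 \<longrightarrow> nsmul n x < y) \<or> arc_equiv x y"
    using bounded assms unfolding arc_equiv_iff bounded_by_multiple_def by (meson not_le)
  then show "arc_le (arc_class x) (arc_class y)"
    unfolding arc_le_def using arc_class_self assms by blast
qed

lemma Arc_bot_nonbot_iff:
  "a \<in> (Arc_bot :: 'g::linordered_ab_group_add set option set) - {None} \<longleftrightarrow>
     (\<exists>x::'g. 0 < x \<and> a = Some (arc_class x))"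
  unfolding Arc_bot_def Arc_def arc_class_def by auto

section \<open>Coinitial subsets and the character \<open>\<chi>\<close>\<close>

definition total_preorder_on :: "'s set \<Rightarrow> ('s \<Rightarrow> 's \<Rightarrow> bool) \<Rightarrow> bool" where
  "total_preorder_on T le \<longleftrightarrow> (\<forall>x\<in>T. \<forall>y\<in>T. le x y \<or> le y x)
     \<and> (\<forall>x\<in>T. \<forall>y\<in>T. \<forall>z\<in>T. le x y \<longrightarrow> le y z \<longrightarrow> le x z)"

definition coinitial :: "'s set \<Rightarrow> ('s \<Rightarrow> 's \<Rightarrow> bool) \<Rightarrow> 's set \<Rightarrow> bool" where
  "coinitial T le Y \<longleftrightarrow> Y \<subseteq> T \<and> (\<forall>t\<in>T. \<exists>y\<in>Y. le y t)"

lemma chi_family_dir_image: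
  assumes "chi_family S le b W" "inj_on g (Field W)"
  shows "chi_family S le b (dir_image W g)"
proof -
  obtain s where s_in: "\<forall>i\<in>Field W. s i \<in> S - {b}"
    and s_decr: "\<forall>i j. (i, j) \<in> W \<and> i \<noteq> j \<longrightarrow> le (s j) (s i) \<and> s j \<noteq> s i"
    and s_coinit: "\<forall>t\<in>S - {b}. \<exists>i\<in>Field W. le (s i) t"
    using assms(1) unfolding chi_family_def by blast
  define s' where "s' = s \<circ> inv_into (Field W) g"
  have s'_g: "s' (g i) = s i" if "i \<in> Field W" for i
    unfolding s'_def using inv_into_f_f[OF assms(2) that] by simp
  have field: "Field (dir_image W g) = g ` Field W" by (rule dir_image_Field)
  have "\<forall>i j. (i, j) \<in> dir_image W g \<and> i \<noteq> j \<longrightarrow> le (s' j) (s' i) \<and> s' j \<noteq> s' i"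
  proof (intro allI impI)
    fix i j assume "(i, j) \<in> dir_image W g \<and> i \<noteq> j"
    then obtain a c where "(a, c) \<in> W" "i = g a" "j = g c" "a \<noteq> c"
      unfolding dir_image_def by blast
    moreover have "a \<in> Field W" "c \<in> Field W" using \<open>(a, c) \<in> W\<close> by (auto intro: FieldI1 FieldI2)
    ultimately show "le (s' j) (s' i) \<and> s' j \<noteq> s' i" using s_decr s'_g by simp
  qed
  moreover have "\<forall>i\<in>Field (dir_image W g). s' i \<in> S - {b}"
    using s_in s'_g field by auto
  moreover have "\<forall>t\<in>S - {b}. \<exists>i\<in>Field (dir_image W g). le (s' i) t"
    using s_coinit s'_g field by fastforce
  ultimately show ?thesis unfolding chi_family_def by blast
qed

text \<open>The minimality in \<open>chi_is\<close> only ranges over relations on the index type of \<open>\<mu>\<close>;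
  transporting along an embedding extends it to index types of any smaller cardinal.\<close>

lemma chi_is_ordLeq:
  assumes chi: "chi_is S le b \<mu>"
    and W: "Card_order W" "Field W \<noteq> {}" "chi_family S le b W"
  shows "\<mu> \<le>o W"
proof (rule ccontr)
  have card_mu: "Card_order \<mu>" using chi unfolding chi_is_def by blast
  assume "\<not> \<mu> \<le>o W"
  then have less: "W <o \<mu>"
    using W(1) card_mu by (simp add: card_order_on_well_order_on not_ordLeq_iff_ordLess)
  have "|Field W| \<le>o |Field \<mu>|"
    using ordIso_ordLeq_trans[OF card_of_Field_ordIso[OF W(1)]
        ordLeq_ordIso_trans[OF ordLess_imp_ordLeq[OF less] ordIso_symmetric[OF card_of_Field_ordIso[OF card_mu]]]] .
  then obtain g where g: "inj_on g (Field W)" "g ` Field W \<subseteq> Field \<mu>"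
    unfolding card_of_ordLeq[symmetric] by blast
  define \<nu> where "\<nu> = dir_image W g"
  have iso: "W =o \<nu>"
    unfolding \<nu>_def using dir_image_ordIso[OF _ g(1)] W(1) by (simp add: card_order_on_def)
  have "Card_order \<nu>" using Card_order_ordIso2[OF W(1) iso] .
  moreover have "Field \<nu> \<noteq> {}" using W(2) unfolding \<nu>_def dir_image_Field by simp
  moreover have "chi_family S le b \<nu>" unfolding \<nu>_def using chi_family_dir_image[OF W(3) g(1)] .
  ultimately have "\<mu> \<le>o \<nu>" using chi unfolding chi_is_def by blast
  then show False using ordIso_ordLess_trans[OF ordIso_symmetric[OF iso] less] not_ordLess_ordLeq by blast
qed

lemma total_preorder_on_finite_has_least:
  assumes "total_preorder_on T le" "finite Y" "Y \<noteq> {}" "Y \<subseteq> T"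
  shows "\<exists>m\<in>Y. \<forall>y\<in>Y. le m y"
  using assms(2-4)
proof (induction Y rule: finite_ne_induct)
  case (singleton x)
  then show ?case using assms(1) unfolding total_preorder_on_def by blast
next
  case (insert x F)
  then obtain m where "m \<in> F" "\<forall>y\<in>F. le m y" by auto
  then show ?case using assms(1) insert.prems unfolding total_preorder_on_def by (metis insert_iff subset_iff)
qed

lemma least_if_finite_coinitial:
  assumes total: "total_preorder_on T le" and "finite Y" "Y \<noteq> {}" and Y: "coinitial T le Y"
  shows "\<exists>m\<in>T. \<forall>t\<in>T. le m t"
proof -
  have Y_sub: "Y \<subseteq> T" and Y_below: "\<forall>t\<in>T. \<exists>y\<in>Y. le y t"
    using Y unfolding coinitial_def by simp_all
  obtain m where m: "m \<in> Y" "\<forall>y\<in>Y. le m y"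
    using total_preorder_on_finite_has_least[OF total assms(2,3) Y_sub] by blast
  have "le m t" if t: "t \<in> T" for t
  proof -
    obtain y where "y \<in> Y" "le y t" using Y_below t by blast
    then show ?thesis using m Y_sub t total unfolding total_preorder_on_def by blast
  qed
  then show ?thesis using m(1) Y_sub by blast
qed

lemma chi_family_least:
  assumes "m \<in> S - {b}" "\<forall>t\<in>S - {b}. le m t"
  shows "chi_family S le b |{m}|"
proof -
  have "i = j" if "(i, j) \<in> |{m}|" for i j
    using FieldI1[OF that] FieldI2[OF that] by (simp add: Field_card_of)
  then show ?thesis
    using assms unfolding chi_family_def Field_card_of by (intro exI[of _ id]) auto
qed

text \<open>Transfinite recursion along \<open>|Y0|\<close>: each \<open>f k\<close> lies strictly below all earlier
  values and below \<open>k\<close> itself; such a point exists because fewer than \<open>|Y0|\<close> points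
  are never coinitial.\<close>

lemma chi_family_of_minimal_coinitial:
  assumes total: "total_preorder_on (S - {b}) le"
    and infinite: "infinite Y0" and Y0: "coinitial (S - {b}) le Y0"
    and minimal: "\<And>Y. coinitial (S - {b}) le Y \<Longrightarrow> |Y0| \<le>o |Y|"
  shows "chi_family S le b |Y0|"
proof -
  let ?W = "|Y0|"
  have wf: "wf (?W - Id)" using card_of_Well_order unfolding well_order_on_def by blast
  have escape: "\<exists>t. t \<in> S - {b} \<and> (\<forall>y\<in>F \<inter> (S - {b}). \<not> le y t)" if "|F| <o |Y0|" for F
  proof (rule ccontr)
    assume "\<not> ?thesis"
    then have "coinitial (S - {b}) le (F \<inter> (S - {b}))" unfolding coinitial_def by blast
    then have "|Y0| \<le>o |F|"
      using ordLeq_transitive[OF minimal card_of_mono1[of "F \<inter> (S - {b})" F]] by blast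
    then show False using that not_ordLess_ordLeq by blast
  qed
  define H where "H f k = (SOME t. t \<in> S - {b} \<and>
      (\<forall>y\<in>(f ` underS ?W k \<union> {k}) \<inter> (S - {b}). \<not> le y t))" for f k
  define f where "f = wfrec (?W - Id) H"
  have f_eq: "f k = H f k" for k
  proof -
    have "f k = H (cut f (?W - Id) k) k" unfolding f_def by (rule wfrec[OF wf])
    also have "\<dots> = H f k" unfolding H_def by (simp add: cut_apply underS_def)
    finally show ?thesis .
  qed
  have f_below: "f k \<in> S - {b} \<and> (\<forall>y\<in>(f ` underS ?W k \<union> {k}) \<inter> (S - {b}). \<not> le y (f k))"
    if "k \<in> Y0" for k
  proof -
    have "|f ` underS ?W k| <o |Y0|"
      using card_of_image card_of_underS[OF card_of_Card_order] that
      by (metis Field_card_of ordLeq_ordLess_trans)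
    moreover have "|{k}| <o |Y0|"
      using finite_ordLess_infinite[OF card_of_Well_order card_of_Well_order, of "{k}" Y0] infinite
      by (simp add: Field_card_of)
    ultimately have "|f ` underS ?W k \<union> {k}| <o |Y0|"
      using card_of_Un_ordLess_infinite[OF infinite] by blast
    then show ?thesis unfolding f_eq[of k] H_def by (rule someI_ex[OF escape])
  qed
  have decreasing: "le (f j) (f i) \<and> f j \<noteq> f i" if "(i, j) \<in> ?W \<and> i \<noteq> j" for i j
  proof -
    have "i \<in> Y0" "j \<in> Y0" using FieldI1[of i j ?W] FieldI2[of i j ?W] that by (simp_all add: Field_card_of)
    moreover have "i \<in> underS ?W j" using that unfolding underS_def by blast
    ultimately have "\<not> le (f i) (f j)" "f i \<in> S - {b}" "f j \<in> S - {b}"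
      using f_below[of j] f_below[of i] by blast+
    then show ?thesis using total unfolding total_preorder_on_def by metis
  qed
  have coinitial_values: "\<exists>k\<in>Y0. le (f k) t" if t: "t \<in> S - {b}" for t
  proof -
    obtain y where y: "y \<in> Y0" "le y t" "y \<in> S - {b}" using Y0 t unfolding coinitial_def by blast
    then have "f y \<in> S - {b}" "\<not> le y (f y)" using f_below[of y] by blast+
    then show ?thesis using y t total unfolding total_preorder_on_def by metis
  qed
  have "\<forall>k\<in>Y0. f k \<in> S - {b}" using f_below by blast
  then show ?thesis
    unfolding chi_family_def Field_card_of using decreasing coinitial_values by blast
qed

lemma chi_is_ordLeq_coinitial:
  assumes chi: "chi_is S le b \<mu>" and total: "total_preorder_on (S - {b}) le"
    and Z: "coinitial (S - {b}) le Z"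
  shows "\<mu> \<le>o |Z|"
proof -
  have "\<exists>r\<in>card_of ` {Y. coinitial (S - {b}) le Y}. \<forall>r'\<in>card_of ` {Y. coinitial (S - {b}) le Y}. r \<le>o r'"
    using Z by (intro exists_minim_Card_order) (auto simp: card_of_Card_order)
  then obtain Y0 where Y0: "coinitial (S - {b}) le Y0"
    and minimal: "\<And>Y. coinitial (S - {b}) le Y \<Longrightarrow> |Y0| \<le>o |Y|"
    by blast
  have "S - {b} \<noteq> {}"
    using chi unfolding chi_is_def chi_family_def by fast
  then have "Y0 \<noteq> {}" using Y0 unfolding coinitial_def by fast
  have "\<mu> \<le>o |Y0|"
  proof (cases "finite Y0")
    case True
    then obtain m where "m \<in> S - {b}" "\<forall>t\<in>S - {b}. le m t"
      using least_if_finite_coinitial[OF total True \<open>Y0 \<noteq> {}\<close> Y0] by blast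
    then have "\<mu> \<le>o |{m}|"
      using chi_is_ordLeq[OF chi card_of_Card_order _ chi_family_least] by (simp add: Field_card_of)
    then show ?thesis by (rule ordLeq_transitive[OF _ card_of_singl_ordLeq[OF \<open>Y0 \<noteq> {}\<close>]])
  next
    case False
    then show ?thesis
      using chi_is_ordLeq[OF chi card_of_Card_order _ chi_family_of_minimal_coinitial[OF total False Y0 minimal]]
        \<open>Y0 \<noteq> {}\<close> by (simp add: Field_card_of)
  qed
  then show ?thesis using ordLeq_transitive[OF _ minimal[OF Z]] by blast
qed

section \<open>Small coinitial sets of positive elements\<close>

lemma total_preorder_on_Arc_bot:
  "total_preorder_on ((Arc_bot :: 'g::linordered_ab_group_add set option set) - {None}) arc_bot_le"
  unfolding total_preorder_on_def
proof (intro conjI ballI impI)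
  fix a b :: "'g set option"
  assume "a \<in> Arc_bot - {None}" "b \<in> Arc_bot - {None}"
  then obtain x y :: 'g where "0 < x" "0 < y" "a = Some (arc_class x)" "b = Some (arc_class y)"
    unfolding Arc_bot_nonbot_iff by blast
  moreover have "bounded_by_multiple x y \<or> bounded_by_multiple y x"
    using bounded_by_multiple_if_le linear[of x y] by blast
  ultimately show "arc_bot_le a b \<or> arc_bot_le b a"
    by (simp add: arc_le_arc_class_iff)
next
  fix a b c :: "'g set option"
  assume "a \<in> Arc_bot - {None}" "b \<in> Arc_bot - {None}" "c \<in> Arc_bot - {None}"
    and "arc_bot_le a b" "arc_bot_le b c"
  moreover obtain x y z :: 'g where "0 < x" "0 < y" "0 < z"
    and "a = Some (arc_class x)" "b = Some (arc_class y)" "c = Some (arc_class z)"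
    using calculation(1-3) unfolding Arc_bot_nonbot_iff by blast
  ultimately show "arc_bot_le a c"
    using bounded_by_multiple_trans by (simp add: arc_le_arc_class_iff) blast
qed

lemma least_arc_class_if_chi_family_singleton:
  assumes chi: "chi_family (Arc_bot :: 'g::linordered_ab_group_add set option set) arc_bot_le None \<kappa>"
    and one: "Field \<kappa> = {i}"
  shows "\<exists>a::'g. 0 < a \<and> (\<forall>g>0. bounded_by_multiple a g)"
proof -
  obtain s where "\<forall>j\<in>Field \<kappa>. s j \<in> (Arc_bot :: 'g set option set) - {None}"
    and "\<forall>t\<in>(Arc_bot :: 'g set option set) - {None}. \<exists>j\<in>Field \<kappa>. arc_bot_le (s j) t"
    using chi unfolding chi_family_def by blast
  then have s_in: "s i \<in> (Arc_bot :: 'g set option set) - {None}"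
    and s_coinitial: "\<forall>t\<in>(Arc_bot :: 'g set option set) - {None}. arc_bot_le (s i) t"
    unfolding one by simp_all
  then obtain a where a: "0 < a" "s i = Some (arc_class a)" using Arc_bot_nonbot_iff by blast
  have "bounded_by_multiple a g" if g: "0 < g" for g
  proof -
    have "Some (arc_class g) \<in> (Arc_bot :: 'g set option set) - {None}"
      using g Arc_bot_nonbot_iff by blast
    then have "arc_bot_le (s i) (Some (arc_class g))" using s_coinitial by blast
    then show ?thesis using a g by (simp add: arc_le_arc_class_iff)
  qed
  then show ?thesis using a(1) by blast
qed

lemma halving_if_no_least_positive:
  fixes c :: "'g::linordered_ab_group_add"
  assumes "\<forall>c'::'g>0. \<exists>r>0. r < c'" "0 < c"
  shows "\<exists>r>0. r + r \<le> c"
proof -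
  obtain r where r: "0 < r" "r < c" using assms by blast
  show ?thesis
  proof (cases "r + r \<le> c")
    case False
    then have "(c - r) + (c - r) \<le> c" by (simp add: algebra_simps)
    then show ?thesis using r by (metis diff_gt_0_iff_gt)
  qed (use r in blast)
qed

text \<open>The witness is the least positive element if there is one, and otherwise a sequence
  \<open>d n\<close> with \<open>2\<^sup>n \<cdot> d n \<le> a\<close> obtained by repeated halving.\<close>

lemma countable_coinitial_if_least_arc_class:
  fixes a :: "'g::linordered_ab_group_add"
  assumes a: "0 < a" "\<forall>g>0. bounded_by_multiple a g"
  shows "\<exists>R::'g set. coinitial {r. 0 < r} (\<le>) R \<and> countable R"
proof (cases "\<exists>c::'g. 0 < c \<and> (\<forall>r>0. c \<le> r)")
  case True
  then obtain c :: 'g where "0 < c" "\<forall>r>0. c \<le> r" by blast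
  then have "coinitial {r. 0 < r} (\<le>) {c}" unfolding coinitial_def by simp
  moreover have "countable {c}" by simp
  ultimately show ?thesis by blast
next
  case False
  then have no_least: "\<forall>c::'g>0. \<exists>r>0. r < c" by (meson not_le)
  have "\<exists>r>0. nsmul (2 ^ n) r \<le> a" for n
  proof (induction n)
    case 0
    then show ?case using a(1) by auto
  next
    case (Suc n)
    then obtain r where r: "0 < r" "nsmul (2 ^ n) r \<le> a" by blast
    obtain r' where r': "0 < r'" "r' + r' \<le> r" using halving_if_no_least_positive[OF no_least r(1)] by blast
    have "nsmul (2 ^ Suc n) r' = nsmul (2 ^ n) (r' + r')"
      by (simp only: power_Suc2 nsmul_mult nsmul_2)
    also have "\<dots> \<le> a" using nsmul_mono[OF r'(2)] r(2) order_trans by blast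
    finally show ?case using r'(1) by blast
  qed
  then obtain d where d: "\<And>n. 0 < d n" "\<And>n. nsmul (2 ^ n) (d n) \<le> a" by metis
  have "\<exists>n. d n \<le> g" if g: "0 < g" for g
  proof -
    obtain m :: nat where m: "m \<ge> 1" "a \<le> nsmul m g"
      using a(2) g unfolding bounded_by_multiple_def by blast
    have "nsmul m (d m) \<le> nsmul (2 ^ m) (d m)"
      using d(1) by (intro nsmul_mono_left) (auto simp: less_imp_le)
    also have "\<dots> \<le> nsmul m g" using d(2) m(2) by (rule order_trans)
    finally show ?thesis using nsmul_le_cancel m(1) by blast
  qed
  then have "coinitial {r. 0 < r} (\<le>) (range d)" unfolding coinitial_def using d(1) by auto
  then show ?thesis by blast
qed

lemma coinitial_card_le_if_chi_family_infinite:
  fixes \<kappa> :: "'k rel"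
  assumes card: "Card_order \<kappa>" and infinite: "natLeq \<le>o \<kappa>"
    and chi: "chi_family (Arc_bot :: 'g::linordered_ab_group_add set option set) arc_bot_le None \<kappa>"
  shows "\<exists>R::'g set. coinitial {r. 0 < r} (\<le>) R \<and> |R| \<le>o \<kappa>"
proof -
  obtain s where s_in: "\<forall>i\<in>Field \<kappa>. s i \<in> (Arc_bot :: 'g set option set) - {None}"
    and s_decr: "\<forall>i j. (i, j) \<in> \<kappa> \<and> i \<noteq> j \<longrightarrow> arc_bot_le (s j) (s i) \<and> s j \<noteq> s i"
    and s_coinitial: "\<forall>t\<in>(Arc_bot :: 'g set option set) - {None}. \<exists>i\<in>Field \<kappa>. arc_bot_le (s i) t"
    using chi unfolding chi_family_def by blast
  obtain rep where rep: "\<And>i. i \<in> Field \<kappa> \<Longrightarrow> 0 < rep i \<and> s i = Some (arc_class (rep i))"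
    using s_in unfolding Arc_bot_nonbot_iff by metis
  have field_iso: "|Field \<kappa>| =o \<kappa>" by (rule card_of_Field_ordIso[OF card])
  have "infinite (Field \<kappa>)"
    using infinite_iff_natLeq_ordLeq ordLeq_ordIso_trans[OF infinite ordIso_symmetric[OF field_iso]] by blast
  have "\<exists>j\<in>Field \<kappa>. rep j \<le> g" if g: "0 < g" for g
  proof -
    have "Some (arc_class g) \<in> (Arc_bot :: 'g set option set) - {None}"
      using g Arc_bot_nonbot_iff by blast
    then obtain i where i: "i \<in> Field \<kappa>" "arc_bot_le (s i) (Some (arc_class g))"
      using s_coinitial by blast
    then have "bounded_by_multiple (rep i) g" using rep[OF i(1)] g by (simp add: arc_le_arc_class_iff)
    \<comment> \<open>An infinite cardinal has no largest element, so some \<open>s j\<close> lies strictly below \<open>s i\<close>.\<close>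
    obtain j where j: "j \<in> Field \<kappa>" "(i, j) \<in> \<kappa>" "i \<noteq> j"
      using infinite_Card_order_limit[OF card \<open>infinite (Field \<kappa>)\<close> i(1)] by blast
    then have "arc_bot_le (s j) (s i)" "s j \<noteq> s i" using s_decr by blast+
    then have "bounded_by_multiple (rep j) (rep i)" "\<not> arc_equiv (rep j) (rep i)"
      using rep[OF i(1)] rep[OF j(1)] by (simp_all add: arc_le_arc_class_iff arc_class_eq_iff)
    then have "\<not> bounded_by_multiple (rep i) (rep j)"
      using rep[OF i(1)] rep[OF j(1)] unfolding arc_equiv_iff by blast
    then show ?thesis
      using less_if_not_bounded_by_multiple \<open>bounded_by_multiple (rep i) g\<close> j(1) less_imp_le by blast
  qed
  then have "coinitial {r. 0 < r} (\<le>) (rep ` Field \<kappa>)" unfolding coinitial_def using rep by auto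
  moreover have "|rep ` Field \<kappa>| \<le>o \<kappa>" by (rule ordLeq_ordIso_trans[OF card_of_image field_iso])
  ultimately show ?thesis by blast
qed

lemma small_coinitial_if_chi_is:
  fixes \<kappa> :: "'k rel" and \<mu> :: "'m rel"
  assumes chi: "chi_is (Arc_bot :: 'g::linordered_ab_group_add set option set) arc_bot_le None \<kappa>"
    and less: "\<kappa> <o \<mu>"
    and cases: "((\<exists>i. Field \<kappa> = {i}) \<and> natLeq <o \<mu>) \<or> natLeq \<le>o \<kappa>"
  shows "\<exists>R::'g set. coinitial {r. 0 < r} (\<le>) R \<and> |R| <o \<mu>"
  using cases
proof
  assume one: "(\<exists>i. Field \<kappa> = {i}) \<and> natLeq <o \<mu>"
  then obtain R :: "'g set" where "coinitial {r. 0 < r} (\<le>) R" "countable R"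
    using chi least_arc_class_if_chi_family_singleton countable_coinitial_if_least_arc_class
    unfolding chi_is_def by metis
  then show ?thesis
    using one countable_card_le_natLeq ordLeq_ordLess_trans by blast
next
  assume "natLeq \<le>o \<kappa>"
  then obtain R :: "'g set" where "coinitial {r. 0 < r} (\<le>) R" "|R| \<le>o \<kappa>"
    using chi coinitial_card_le_if_chi_family_infinite unfolding chi_is_def by blast
  then show ?thesis using less ordLeq_ordLess_trans by blast
qed

section \<open>Metric topologies\<close>

lemma is_GmetricD:
  assumes "is_Gmetric A d" "x \<in> A" "y \<in> A"
  shows "d x x = 0" "x \<noteq> y \<Longrightarrow> 0 < d x y" "z \<in> A \<Longrightarrow> d x z \<le> d x y + d y z"
  using assms unfolding is_Gmetric_def by (auto simp: order.order_iff_strict)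

lemma Met_openin_iff:
  assumes "d \<in> Met X"
  shows "openin X U \<longleftrightarrow>
    generate_topology_on {gball (topspace X) d x r | x r. x \<in> topspace X \<and> 0 < r} U"
proof -
  define B where "B = {gball (topspace X) d x r | x r. x \<in> topspace X \<and> 0 < r}"
  have "X = topology_generated_by B" using assms unfolding Met_def B_def by blast
  then have "openin X U = openin (topology_generated_by B) U" by simp
  then show ?thesis unfolding B_def[symmetric] openin_topology_generated_by_iff .
qed

lemma Met_openin_gball:
  assumes "d \<in> Met X" "x \<in> topspace X" "0 < r"
  shows "openin X (gball (topspace X) d x r)"
  unfolding Met_openin_iff[OF assms(1)] by (rule generate_topology_on.Basis) (use assms in blast)

lemma Met_openin_contains_gball:
  fixes d :: "'a \<Rightarrow> 'a \<Rightarrow> 'g::linordered_ab_group_add"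
  assumes d: "d \<in> Met X" and U: "openin X U" and x: "x \<in> U"
  shows "\<exists>r>0. gball (topspace X) d x r \<subseteq> U"
proof -
  have metric: "is_Gmetric (topspace X) d" using d unfolding Met_def by blast
  have x_space: "x \<in> topspace X" using U x openin_subset by blast
  show ?thesis using U[unfolded Met_openin_iff[OF d]] x
  proof (induction U rule: generate_topology_on.induct)
    case (Int U V)
    then obtain r s where "0 < r" "gball (topspace X) d x r \<subseteq> U" "0 < s" "gball (topspace X) d x s \<subseteq> V"
      by blast
    then have "0 < min r s" "gball (topspace X) d x (min r s) \<subseteq> U \<inter> V"
      unfolding gball_def by auto
    then show ?case by blast
  next
    case (UN K)
    then show ?case by blast
  next
    case (Basis B)
    then obtain z r where B: "B = gball (topspace X) d z r" "z \<in> topspace X"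
      and "d z x < r" unfolding gball_def by blast
    have "d z w < r" if "w \<in> topspace X" "d x w < r - d z x" for w
      using is_GmetricD(3)[OF metric B(2) x_space that(1)] that(2) by (simp add: algebra_simps)
    then have "gball (topspace X) d x (r - d z x) \<subseteq> B"
      unfolding B gball_def by blast
    moreover have "0 < r - d z x" using \<open>d z x < r\<close> by simp
    ultimately show ?case by blast
  qed simp
qed

text \<open>Every \<open>e\<close>-ball around \<open>x\<close> contains a \<open>d\<close>-ball, so for each \<open>h > 0\<close> some
  \<open>r \<in> R\<close> gives \<open>e x (y r) < h\<close>.\<close>

lemma coinitial_arc_classes_of_converging_points:
  fixes d :: "'a \<Rightarrow> 'a \<Rightarrow> 'g::linordered_ab_group_add" and e :: "'a \<Rightarrow> 'a \<Rightarrow> 'h::linordered_ab_group_add"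
  assumes d: "d \<in> Met X" and e: "e \<in> Met X" and x: "x \<in> topspace X"
    and R: "coinitial {r. 0 < r} (\<le>) R"
    and y: "\<And>r. r \<in> R \<Longrightarrow> y r \<in> topspace X \<and> y r \<noteq> x \<and> d x (y r) < r"
  shows "coinitial ((Arc_bot :: 'h set option set) - {None}) arc_bot_le
           ((\<lambda>r. Some (arc_class (e x (y r)))) ` R)"
proof -
  have metric: "is_Gmetric (topspace X) e" using e unfolding Met_def by blast
  have e_pos: "0 < e x (y r)" if "r \<in> R" for r
    using is_GmetricD(2)[OF metric x] y[OF that] by metis
  have "\<exists>r\<in>R. arc_bot_le (Some (arc_class (e x (y r)))) (Some (arc_class h))" if h: "0 < h" for h
  proof -
    have "x \<in> gball (topspace X) e x h"
      unfolding gball_def using x h is_GmetricD(1)[OF metric x x] by simp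
    then obtain g where g: "0 < g" "gball (topspace X) d x g \<subseteq> gball (topspace X) e x h"
      using Met_openin_contains_gball[OF d Met_openin_gball[OF e x h]] by blast
    obtain r where r: "r \<in> R" "r \<le> g" using R g(1) unfolding coinitial_def by blast
    then have "y r \<in> gball (topspace X) e x h"
      using g(2) y[OF r(1)] unfolding gball_def by fastforce
    then have "bounded_by_multiple (e x (y r)) h"
      unfolding gball_def by (simp add: bounded_by_multiple_if_le less_imp_le)
    then have "arc_bot_le (Some (arc_class (e x (y r)))) (Some (arc_class h))"
      using e_pos[OF r(1)] h by (simp add: arc_le_arc_class_iff)
    then show ?thesis using r(1) by blast
  qed
  moreover have "Some (arc_class (e x (y r))) \<in> (Arc_bot :: 'h set option set) - {None}" if "r \<in> R" for r
    using e_pos[OF that] Arc_bot_nonbot_iff by blast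
  moreover have "\<exists>h>0. t = Some (arc_class h)" if "t \<in> (Arc_bot :: 'h set option set) - {None}" for t
    using that Arc_bot_nonbot_iff by blast
  ultimately show ?thesis unfolding coinitial_def by fast
qed

lemma Met_openin_singleton_if_small_coinitial:
  fixes d :: "'a \<Rightarrow> 'a \<Rightarrow> 'g::linordered_ab_group_add" and e :: "'a \<Rightarrow> 'a \<Rightarrow> 'h::linordered_ab_group_add"
    and R :: "'g set"
  assumes d: "d \<in> Met X" and e: "e \<in> Met X"
    and chi: "chi_is (Arc_bot :: 'h set option set) arc_bot_le None \<mu>"
    and R: "coinitial {r. 0 < r} (\<le>) R" "|R| <o \<mu>"
    and x: "x \<in> topspace X"
  shows "openin X {x}"
proof (rule ccontr)
  assume not_open: "\<not> openin X {x}"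
  have "\<exists>y. y \<in> topspace X \<and> y \<noteq> x \<and> d x y < r" if r: "r \<in> R" for r
  proof (rule ccontr)
    assume "\<not> ?thesis"
    then have "gball (topspace X) d x r = {x}"
      using x R(1) r is_GmetricD(1)[of "topspace X" d x x] d
      unfolding gball_def coinitial_def Met_def by auto
    moreover have "0 < r" using R(1) r unfolding coinitial_def by blast
    ultimately show False using Met_openin_gball[OF d x] not_open by metis
  qed
  then obtain y where "\<And>r. r \<in> R \<Longrightarrow> y r \<in> topspace X \<and> y r \<noteq> x \<and> d x (y r) < r"
    by metis
  then have "\<mu> \<le>o |(\<lambda>r. Some (arc_class (e x (y r)))) ` R|"
    using chi_is_ordLeq_coinitial[OF chi total_preorder_on_Arc_bot
        coinitial_arc_classes_of_converging_points[OF d e x R(1)]] by blast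
  then have "\<mu> <o \<mu>" by (rule ordLeq_ordLess_trans[OF ordLeq_transitive[OF _ card_of_image] R(2)])
  then show False using ordLess_irreflexive by blast
qed

theorem proposition2p49:
  fixes X :: "'a topology" and \<kappa> :: "'k rel" and \<mu> :: "'m rel"
  assumes "\<kappa> \<in> MG X TYPE('g::linordered_ab_group_add)"
    and "\<mu> \<in> MG X TYPE('h::linordered_ab_group_add)"
    and "(\<kappa>, \<mu>) \<in> ordLess"
    and "((\<exists>i. Field \<kappa> = {i}) \<and> (natLeq, \<mu>) \<in> ordLess) \<or> (natLeq, \<kappa>) \<in> ordLeq"
  shows "X = discrete_topology (topspace X)"
proof -
  obtain d :: "'a \<Rightarrow> 'a \<Rightarrow> 'g" where d: "d \<in> Met X"
    and chi_d: "chi_is (Arc_bot :: 'g set option set) arc_bot_le None \<kappa>"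
    using assms(1) unfolding MG_def by blast
  obtain e :: "'a \<Rightarrow> 'a \<Rightarrow> 'h" where e: "e \<in> Met X"
    and chi_e: "chi_is (Arc_bot :: 'h set option set) arc_bot_le None \<mu>"
    using assms(2) unfolding MG_def by blast
  obtain R :: "'g set" where "coinitial {r. 0 < r} (\<le>) R" "|R| <o \<mu>"
    using small_coinitial_if_chi_is[OF chi_d assms(3,4)] by blast
  then show ?thesis
    using Met_openin_singleton_if_small_coinitial[OF d e chi_e] discrete_topology_unique by metis
qed

end
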